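(* Suppose $F$ satisfies Assumption A1, $F\in MDA(\Lambda)$, Assumption A3, and $x_F=\infty$. For a threshold $a$ set $\beta=\bar F(a)$, $\eta=f(a)$, $\nu=-f'(a)$. Fix $x$ with $1/2<x\le1$ and let $p=p(a)$ satisfy $1-p=x\beta$. Let $q=F^{-1}(p)$ be the true $p$-quantile and $q^*$ the optimal value of $$\sup_{q'\ge a,\,g}\ q'\ \text{ s.t. }(1-\beta)+\int_a^{q'}g=p,\ \int_a^\infty g=\beta,\ g(a)=g(a+)=\eta,\ g'_+(a)\ge-\nu,\ g\text{ convex and }\ge0\text{ on }[a,\infty).$$ Then $\lim_{a\to\infty}q^*/q=1$.
   Context: $X$ is a continuous random variable with distribution function $F$, density $f$, $\bar F=1-F$, right endpoint $x_F=\sup\{x:F(x)<1\}$. $\Lambda(x)=\exp\{-e^{-x}\}$. $F\in MDA(\Lambda)$ means there exist $c_n>0$, $d_n$ with $c_n^{-1}(M_n-d_n)$ converging in distribution to $\Lambda$, $M_n$ the maximum of $n$ i.i.d. copies of $X$. Assumption A1: there exists $z<x_F$ such that on $(z,x_F)$, $F$ is twice differentiable and $f$ is positive, decreasing and convex. Assumption A3: $\lim_{x\uparrow x_F}\bar F(x)f'(x)/f(x)^2=-1$. $g(a+)$ is the right limit and $g'_+$ the right derivative. *)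

theory Defs
  imports "HOL-Analysis.Analysis"
begin

definition Gumbel :: "real \<Rightarrow> real" where
  "Gumbel x = exp (- exp (- x))"

text \<open>F in MDA(Lambda): the maximum M_n of n iid copies has distribution function F^n,
  so convergence in distribution of (M_n - d_n)/c_n to the continuous Lambda is
  pointwise convergence F(c_n x + d_n)^n -> Lambda(x) for all x.\<close>
definition MDA_Gumbel :: "(real \<Rightarrow> real) \<Rightarrow> bool" where
  "MDA_Gumbel F \<longleftrightarrow> (\<exists>c d :: nat \<Rightarrow> real. (\<forall>n. c n > 0) \<and>
      (\<forall>x. (\<lambda>n. F (c n * x + d n) ^ n) \<longlonglongrightarrow> Gumbel x))"

definition quantile :: "(real \<Rightarrow> real) \<Rightarrow> real \<Rightarrow> real" where
  "quantile F p = Inf {t. p \<le> F t}"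

definition assumption_A1 :: "(real \<Rightarrow> real) \<Rightarrow> (real \<Rightarrow> real) \<Rightarrow> bool" where
  "assumption_A1 F f \<longleftrightarrow> (\<exists>z. convex_on {z<..} f \<and>
       (\<forall>t>z. (F has_real_derivative f t) (at t) \<and> f differentiable (at t) \<and> f t > 0) \<and>
       (\<forall>s t. z < s \<and> s \<le> t \<longrightarrow> f t \<le> f s))"

definition assumption_A3 :: "(real \<Rightarrow> real) \<Rightarrow> (real \<Rightarrow> real) \<Rightarrow> bool" where
  "assumption_A3 F f \<longleftrightarrow>
     ((\<lambda>x. (1 - F x) * deriv f x / (f x)^2) \<longlongrightarrow> -1) at_top"

definition feasible :: "real \<Rightarrow> real \<Rightarrow> real \<Rightarrow> real \<Rightarrow> real \<Rightarrow> real set" where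
  "feasible a p \<beta> \<eta> \<nu> = {q'. q' \<ge> a \<and> (\<exists>g :: real \<Rightarrow> real.
       (g has_integral (p - (1 - \<beta>))) {a..q'} \<and>
       (g has_integral \<beta>) {a..} \<and>
       g a = \<eta> \<and> (g \<longlongrightarrow> \<eta>) (at_right a) \<and>
       (\<exists>d. (g has_real_derivative d) (at a within {a..}) \<and> d \<ge> - \<nu>) \<and>
       convex_on {a..} g \<and> (\<forall>t\<ge>a. g t \<ge> 0))}"

definition qstar :: "(real \<Rightarrow> real) \<Rightarrow> (real \<Rightarrow> real) \<Rightarrow> real \<Rightarrow> real \<Rightarrow> ereal" where
  "qstar F f x a = Sup (ereal ` feasible a (1 - x * (1 - F a)) (1 - F a) (f a) (- deriv f a))"

end

theory Submission
  imports Defs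
begin

text \<open>A feasible g is convex with g(a) = \<eta> and g'_+(a) \<ge> -\<nu>, so it lies above the tangent line
  \<eta> - \<nu>(t - a) and carries mass at least \<eta>^2/(2\<nu>) on [a, a + \<eta>/\<nu>]. By A3 this triangle mass
  is asymptotically \<beta>/2, which exceeds the mass (1 - x)\<beta> allotted to [a, q'] when x > 1/2; hence
  every feasible q' is at most a + \<eta>/\<nu>. The true density is feasible with q' = q \<ge> a, so
  1 \<le> q*/q \<le> 1 + \<eta>/(\<nu>a). Finally \<eta>/(\<nu>a) \<rightarrow> 0: by A3 the derivative of \<beta>/\<eta> tends to 0, so
  \<beta>/\<eta> = o(a), and \<eta>/\<nu> ~ \<beta>/\<eta>.\<close>

definition tail_slope_ratio :: "(real \<Rightarrow> real) \<Rightarrow> (real \<Rightarrow> real) \<Rightarrow> real \<Rightarrow> real" where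
  "tail_slope_ratio F f t = (1 - F t) * deriv f t / (f t)\<^sup>2"

lemma tail_slope_ratio_tendsto: "assumption_A3 F f \<Longrightarrow> (tail_slope_ratio F f \<longlongrightarrow> -1) at_top"
  unfolding assumption_A3_def tail_slope_ratio_def[abs_def] .

lemma convex_on_ge_right_tangent:
  fixes g :: "real \<Rightarrow> real"
  assumes convex: "convex_on {a..} g"
    and deriv: "(g has_real_derivative d) (at a within {a..})"
    and "a \<le> t"
  shows "g a + d * (t - a) \<le> g t"
proof (cases "t = a")
  case False
  with \<open>a \<le> t\<close> have "a < t" by simp
  have "((\<lambda>y. (g y - g a) / (y - a)) \<longlongrightarrow> d) (at_right a)"
    using deriv unfolding has_field_derivative_iff
    by (rule tendsto_mono[rotated]) (auto intro: at_le)
  moreover have "eventually (\<lambda>y. (g y - g a) / (y - a) \<le> (g t - g a) / (t - a)) (at_right a)"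
    using eventually_at_right_real[OF \<open>a < t\<close>]
  proof eventually_elim
    fix y assume y: "y \<in> {a<..<t}"
    have "convex_on {a..t} g" using convex by (rule convex_on_subset) auto
    then have "g y - g a \<le> (g t - g a) / (t - a) * (y - a)"
      using convex_onD_Icc'[of a t g y] y by simp
    then show "(g y - g a) / (y - a) \<le> (g t - g a) / (t - a)"
      using y by (simp add: divide_le_eq mult.commute)
  qed
  ultimately have "d \<le> (g t - g a) / (t - a)"
    by (rule tendsto_upperbound) (simp add: trivial_limit_at_right_real)
  then show ?thesis using \<open>a < t\<close> by (simp add: field_simps)
qed simp

lemma has_integral_tangent_triangle:
  fixes \<eta> \<nu> :: real
  assumes "\<nu> > 0" "\<eta> \<ge> 0"
  shows "((\<lambda>t. \<eta> - \<nu> * (t - a)) has_integral \<eta>\<^sup>2 / (2 * \<nu>)) {a..a + \<eta> / \<nu>}"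
proof -
  define P where "P t = \<eta> * (t - a) - \<nu> / 2 * (t - a)\<^sup>2" for t
  have "((\<lambda>t. \<eta> - \<nu> * (t - a)) has_integral P (a + \<eta> / \<nu>) - P a) {a..a + \<eta> / \<nu>}"
  proof (rule fundamental_theorem_of_calculus)
    show "a \<le> a + \<eta> / \<nu>" using assms by simp
    show "(P has_vector_derivative \<eta> - \<nu> * (t - a)) (at t within {a..a + \<eta> / \<nu>})" for t
      unfolding P_def has_real_derivative_iff_has_vector_derivative[symmetric]
      by (auto intro!: derivative_eq_intros simp: field_simps)
  qed
  moreover have "P (a + \<eta> / \<nu>) - P a = \<eta>\<^sup>2 / (2 * \<nu>)"
    using assms by (simp add: P_def field_simps power2_eq_square)
  ultimately show ?thesis by simp
qed

lemma convex_integral_ge_triangle: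
  fixes g :: "real \<Rightarrow> real"
  assumes convex: "convex_on {a..} g"
    and deriv: "(g has_real_derivative d) (at a within {a..})" "d \<ge> - \<nu>"
    and "g a = \<eta>" "\<forall>t\<ge>a. g t \<ge> 0" "\<nu> > 0" "\<eta> \<ge> 0"
    and integral: "(g has_integral I) {a..q}" and "a + \<eta> / \<nu> \<le> q"
  shows "\<eta>\<^sup>2 / (2 * \<nu>) \<le> I"
proof -
  let ?c = "a + \<eta> / \<nu>"
  have sub: "{a..?c} \<subseteq> {a..q}" using assms by simp
  have "g integrable_on {a..?c}"
    using integral sub by (blast intro: integrable_on_subinterval)
  have "\<eta>\<^sup>2 / (2 * \<nu>) \<le> integral {a..?c} g"
  proof (rule has_integral_le[OF has_integral_tangent_triangle])
    fix t assume "t \<in> {a..?c}"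
    then have "d * (t - a) \<ge> - \<nu> * (t - a)" using deriv by (intro mult_right_mono) auto
    with convex_on_ge_right_tangent[OF convex deriv(1)] \<open>t \<in> {a..?c}\<close> \<open>g a = \<eta>\<close>
    show "\<eta> - \<nu> * (t - a) \<le> g t" by fastforce
  qed (use \<open>g integrable_on {a..?c}\<close> assms in auto)
  also have "\<dots> \<le> integral {a..q} g"
    using sub \<open>g integrable_on {a..?c}\<close> integral assms by (intro integral_subset_le) auto
  finally show ?thesis using integral by (simp add: integral_unique)
qed

lemma feasible_le_tangent_root:
  assumes "q' \<in> feasible a p \<beta> \<eta> \<nu>" "\<nu> > 0" "\<eta> \<ge> 0"
    and "p - (1 - \<beta>) < \<eta>\<^sup>2 / (2 * \<nu>)"
  shows "q' \<le> a + \<eta> / \<nu>"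
proof (rule ccontr)
  assume "\<not> q' \<le> a + \<eta> / \<nu>"
  moreover obtain g d where "(g has_integral (p - (1 - \<beta>))) {a..q'}" "g a = \<eta>"
      "(g has_real_derivative d) (at a within {a..})" "d \<ge> - \<nu>" "convex_on {a..} g" "\<forall>t\<ge>a. g t \<ge> 0"
    using assms(1) unfolding feasible_def by blast
  ultimately have "\<eta>\<^sup>2 / (2 * \<nu>) \<le> p - (1 - \<beta>)"
    using assms by (intro convex_integral_ge_triangle[where g = g]) auto
  with assms(4) show False by simp
qed

lemma has_integral_density_Icc:
  fixes F f :: "real \<Rightarrow> real"
  assumes density: "\<forall>t. (f has_integral F t) {..t}" and "s \<le> t"
  shows "(f has_integral (F t - F s)) {s..t}"
proof -
  have "f integrable_on {s..t}"
    using density by (intro integrable_on_subinterval[of f "{..t}"]) auto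
  then have "(f has_integral (F s + integral {s..t} f)) ({..s} \<union> {s..t})"
    using density \<open>s \<le> t\<close> by (intro has_integral_Un) (auto intro: negligible_subset[of "{s}"])
  moreover have "{..s} \<union> {s..t} = {..t}" using \<open>s \<le> t\<close> by auto
  ultimately have "F t = F s + integral {s..t} f"
    using density has_integral_unique by metis
  then show ?thesis
    using \<open>f integrable_on {s..t}\<close> by (simp add: has_integral_integral)
qed

lemma tail_over_density_div_tendsto_0:
  fixes F f :: "real \<Rightarrow> real"
  assumes "\<And>t. t > z \<Longrightarrow> (F has_real_derivative f t) (at t)"
    and "\<And>t. t > z \<Longrightarrow> f differentiable (at t)" "\<And>t. t > z \<Longrightarrow> f t > 0"
    and A3: "assumption_A3 F f"
  shows "((\<lambda>t. (1 - F t) / f t / t) \<longlongrightarrow> 0) at_top"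
proof -
  let ?k = "tail_slope_ratio F f"
  have "((\<lambda>t. ((1 - F t) / f t) / t) \<longlongrightarrow> 0) at_top"
  proof (rule lhospital_at_top_at_top[where f' = "\<lambda>t. - 1 - ?k t" and g' = "\<lambda>_. 1"])
    show "eventually (\<lambda>t. ((\<lambda>t. (1 - F t) / f t) has_real_derivative - 1 - ?k t) (at t)) at_top"
      using eventually_gt_at_top[of z]
    proof eventually_elim
      case (elim t)
      have "(f has_real_derivative deriv f t) (at t)"
        using assms(2)[OF elim] by (simp add: DERIV_deriv_iff_real_differentiable)
      then have "((\<lambda>t. (1 - F t) / f t) has_real_derivative
          ((0 - f t) * f t - (1 - F t) * deriv f t) / (f t * f t)) (at t)"
        using assms(1,3)[OF elim] by (intro DERIV_divide DERIV_diff DERIV_const) auto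
      then show ?case
        using assms(3)[OF elim] by (simp add: tail_slope_ratio_def field_simps power2_eq_square)
    qed
    show "((\<lambda>t. (- 1 - ?k t) / 1) \<longlongrightarrow> 0) at_top"
      using tail_slope_ratio_tendsto[OF A3] by (auto intro!: tendsto_eq_intros)
  qed (auto intro!: derivative_eq_intros simp: filterlim_ident)
  then show ?thesis by simp
qed

lemma mono_less_of_pos_deriv:
  fixes F :: "real \<Rightarrow> real"
  assumes "mono F" "(F has_real_derivative l) (at a)" "l > 0" "t < a"
  shows "F t < F a"
proof -
  obtain d where "d > 0" and below: "\<And>h. 0 < h \<Longrightarrow> h < d \<Longrightarrow> F (a - h) < F a"
    using DERIV_pos_inc_left[OF assms(2,3)] by blast
  define h where "h = min (a - t) (d / 2)"
  have "F t \<le> F (a - h)"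
    using \<open>mono F\<close> by (rule monoD) (simp add: h_def)
  also have "\<dots> < F a"
    using below \<open>d > 0\<close> \<open>t < a\<close> by (simp add: h_def)
  finally show ?thesis .
qed

lemma
  fixes F :: "real \<Rightarrow> real"
  assumes cont: "continuous_on UNIV F" and top: "(F \<longlongrightarrow> 1) at_top"
    and "F a \<le> p" "p < 1" and below: "\<And>t. t < a \<Longrightarrow> F t < p"
  shows quantile_ge: "a \<le> quantile F p"
    and F_quantile: "F (quantile F p) = p"
proof -
  define S where "S = {t. p \<le> F t}"
  have S_ge: "a \<le> t" if "t \<in> S" for t
    using below[of t] that unfolding S_def by fastforce
  obtain N where "\<And>t. t \<ge> N \<Longrightarrow> F t > p"
    using order_tendstoD(1)[OF top \<open>p < 1\<close>] by (auto simp: eventually_at_top_linorder)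
  then have "N \<in> S" by (simp add: S_def less_imp_le)
  have "closed S" unfolding S_def by (intro closed_Collect_le continuous_on_const cont)
  then have "Inf S \<in> S"
    using \<open>N \<in> S\<close> S_ge by (intro closed_contains_Inf bdd_belowI) auto
  have "a \<le> Inf S"
    using \<open>N \<in> S\<close> S_ge by (intro cInf_greatest) auto
  then show "a \<le> quantile F p" by (simp add: quantile_def S_def)
  obtain t where t: "a \<le> t" "t \<le> Inf S" "F t = p"
    using IVT[of F a p "Inf S"] \<open>F a \<le> p\<close> \<open>Inf S \<in> S\<close> \<open>a \<le> Inf S\<close> cont
    by (auto simp: S_def continuous_on_eq_continuous_at)
  then have "Inf S \<le> t"
    using S_ge by (intro cInf_lower bdd_belowI) (auto simp: S_def)
  with t show "F (quantile F p) = p" by (simp add: quantile_def S_def)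
qed

lemma density_quantile_feasible:
  fixes F f :: "real \<Rightarrow> real"
  assumes density: "\<forall>t. (f has_integral F t) {..t}" and top: "(F \<longlongrightarrow> 1) at_top"
    and "\<forall>t. f t \<ge> 0" "convex_on {a..} f" "f differentiable (at a)" "a \<le> q"
  shows "q \<in> feasible a (F q) (1 - F a) (f a) (- deriv f a)"
  unfolding feasible_def
proof (intro CollectI conjI exI[of _ f])
  show "(f has_integral (F q - (1 - (1 - F a)))) {a..q}"
    using has_integral_density_Icc[OF density \<open>a \<le> q\<close>] by simp
  show "(f has_integral (1 - F a)) {a..}"
  proof (rule has_integral_to_inf)
    show "f integrable_on {a..y}" for y
      using density by (intro integrable_on_subinterval[of f "{..y}"]) auto
    have "eventually (\<lambda>y. F y - F a = integral {a..y} f) at_top"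
      using eventually_ge_at_top[of a]
      by eventually_elim (metis has_integral_density_Icc[OF density] integral_unique)
    then show "((\<lambda>y. integral {a..y} f) \<longlongrightarrow> 1 - F a) at_top"
      by (rule tendsto_cong[THEN iffD1]) (intro tendsto_intros top)
  qed (use assms in auto)
  have "(f has_real_derivative deriv f a) (at a)"
    using \<open>f differentiable (at a)\<close> by (simp add: DERIV_deriv_iff_real_differentiable)
  then show "(f \<longlongrightarrow> f a) (at_right a)"
    using DERIV_isCont[of f] by (simp add: isCont_def filterlim_at_split)
  show "\<exists>d. (f has_real_derivative d) (at a within {a..}) \<and> - (- deriv f a) \<le> d"
    using \<open>(f has_real_derivative deriv f a) (at a)\<close> by (auto intro: has_field_derivative_at_within)
qed (use assms in auto)

lemma ereal_ratio_tendsto_1: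
  fixes X :: "'a \<Rightarrow> ereal" and Q r :: "'a \<Rightarrow> real"
  assumes "eventually (\<lambda>a. 0 < Q a \<and> ereal (Q a) \<le> X a \<and> X a \<le> ereal (Q a * r a)) F"
    and "(r \<longlongrightarrow> 1) F"
  shows "((\<lambda>a. X a / ereal (Q a)) \<longlongrightarrow> 1) F"
proof (rule tendsto_sandwich[where f = "\<lambda>_. 1" and h = "\<lambda>a. ereal (r a)"])
  show "eventually (\<lambda>a. 1 \<le> X a / ereal (Q a)) F"
    using assms(1) by eventually_elim (simp add: ereal_le_divide_pos)
  show "eventually (\<lambda>a. X a / ereal (Q a) \<le> ereal (r a)) F"
    using assms(1) by eventually_elim (simp add: ereal_divide_le_pos)
  show "((\<lambda>a. ereal (r a)) \<longlongrightarrow> 1) F"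
    using assms(2) by (simp add: one_ereal_def)
qed simp

lemma density_over_slope_div_tendsto_0:
  fixes F f :: "real \<Rightarrow> real"
  assumes A1: "assumption_A1 F f" and A3: "assumption_A3 F f" and "\<forall>t. F t < 1"
  shows "((\<lambda>a. f a / (- deriv f a) / a) \<longlongrightarrow> 0) at_top"
proof -
  obtain z where A1': "\<And>t. t > z \<Longrightarrow>
      (F has_real_derivative f t) (at t) \<and> f differentiable (at t) \<and> f t > 0"
    using A1 unfolding assumption_A1_def by blast
  let ?k = "tail_slope_ratio F f"
  have "((\<lambda>a. (1 - F a) / f a / a) \<longlongrightarrow> 0) at_top"
    using A1' A3 by (intro tail_over_density_div_tendsto_0[of z]) auto
  from tendsto_divide[OF this tendsto_minus[OF tail_slope_ratio_tendsto[OF A3]]]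
  have "((\<lambda>a. (1 - F a) / f a / a / (- ?k a)) \<longlongrightarrow> 0) at_top" by simp
  moreover have "eventually (\<lambda>a. (1 - F a) / f a / a / (- ?k a) = f a / (- deriv f a) / a) at_top"
    using eventually_gt_at_top[of z]
  proof eventually_elim
    case (elim a)
    then have "f a > 0" "F a < 1" using A1' assms(3) by auto
    then show ?case by (simp add: tail_slope_ratio_def power2_eq_square)
  qed
  ultimately show ?thesis by (rule Lim_transform_eventually)
qed

lemma qstar_between_quantile_and_tangent_root:
  fixes F f :: "real \<Rightarrow> real"
  assumes "mono F" "continuous_on UNIV F" "(F \<longlongrightarrow> 1) at_top"
    and "\<forall>t. f t \<ge> 0" "\<forall>t. (f has_integral F t) {..t}"
    and "convex_on {a..} f" "(F has_real_derivative f a) (at a)" "f differentiable (at a)"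
    and "f a > 0" "F a < 1" "deriv f a < 0" "0 < x" "x \<le> 1"
    and small: "(1 - x) * (1 - F a) < (f a)\<^sup>2 / (2 * (- deriv f a))"
  shows "a \<le> quantile F (1 - x * (1 - F a))"
    and "ereal (quantile F (1 - x * (1 - F a))) \<le> qstar F f x a"
    and "qstar F f x a \<le> ereal (a + f a / (- deriv f a))"
proof -
  define p where "p = 1 - x * (1 - F a)"
  have "x * (1 - F a) \<le> 1 - F a" "0 < x * (1 - F a)"
    using assms by (auto simp: mult_le_cancel_right1)
  then have "F a \<le> p" "p < 1" by (auto simp: p_def)
  have below: "F t < p" if "t < a" for t
    using mono_less_of_pos_deriv[OF assms(1,7,9) that] \<open>F a \<le> p\<close> by simp
  have "a \<le> quantile F p" and F_q: "F (quantile F p) = p"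
    using quantile_ge F_quantile assms(2,3) \<open>F a \<le> p\<close> \<open>p < 1\<close> below by blast+
  then show "a \<le> quantile F (1 - x * (1 - F a))" by (simp add: p_def)
  have "quantile F p \<in> feasible a p (1 - F a) (f a) (- deriv f a)"
    using density_quantile_feasible[OF assms(5,3,4,6,8) \<open>a \<le> quantile F p\<close>] F_q by simp
  then show "ereal (quantile F (1 - x * (1 - F a))) \<le> qstar F f x a"
    unfolding qstar_def p_def by (intro Sup_upper) auto
  have "q' \<le> a + f a / (- deriv f a)" if "q' \<in> feasible a p (1 - F a) (f a) (- deriv f a)" for q'
    using that assms small by (intro feasible_le_tangent_root) (auto simp: p_def algebra_simps)
  then show "qstar F f x a \<le> ereal (a + f a / (- deriv f a))"
    unfolding qstar_def p_def by (intro Sup_least) auto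
qed

lemma eventually_qstar_sandwich:
  fixes F f :: "real \<Rightarrow> real"
  assumes F_mono: "mono F" and F_cont: "continuous_on UNIV F" and F_top: "(F \<longlongrightarrow> 1) at_top"
    and f_nonneg: "\<forall>t. f t \<ge> 0" and f_density: "\<forall>t. (f has_integral F t) {..t}"
    and A1: "assumption_A1 F f" and A3: "assumption_A3 F f" and "\<forall>t. F t < 1"
    and x_gt: "1/2 < x" and x_le: "x \<le> 1"
  shows "eventually (\<lambda>a. 0 < quantile F (1 - x * (1 - F a)) \<and>
      ereal (quantile F (1 - x * (1 - F a))) \<le> qstar F f x a \<and>
      qstar F f x a \<le> ereal (quantile F (1 - x * (1 - F a)) * (1 + f a / (- deriv f a) / a))) at_top"
proof -
  obtain z where convex: "convex_on {z<..} f"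
    and A1': "\<forall>t>z. (F has_real_derivative f t) (at t) \<and> f differentiable (at t) \<and> f t > 0"
    using A1 unfolding assumption_A1_def by blast
  have "0 < x" using x_gt by simp
  let ?k = "tail_slope_ratio F f"
  have "eventually (\<lambda>a. ?k a < 0 \<and> 2 * (1 - x) * (- ?k a) < 1) at_top"
    using tail_slope_ratio_tendsto[OF A3] x_gt
    by (intro eventually_conj order_tendstoD tendsto_eq_intros) auto
  then show ?thesis
    using eventually_gt_at_top[of "max z 0"]
  proof eventually_elim
    case (elim a)
    have "convex_on {a..} f" using elim by (intro convex_on_subset[OF convex]) auto
    have "(F has_real_derivative f a) (at a)" "f differentiable (at a)" "f a > 0" "F a < 1"
      using elim A1' assms(8) by auto
    with elim have "deriv f a < 0"
      by (simp add: tail_slope_ratio_def divide_less_0_iff mult_less_0_iff)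
    have "(1 - x) * (1 - F a) < (f a)\<^sup>2 / (2 * (- deriv f a))"
      using elim \<open>f a > 0\<close> \<open>deriv f a < 0\<close> by (simp add: tail_slope_ratio_def field_simps)
    note bounds = qstar_between_quantile_and_tangent_root[OF F_mono F_cont F_top f_nonneg f_density
        \<open>convex_on {a..} f\<close> \<open>(F has_real_derivative f a) (at a)\<close> \<open>f differentiable (at a)\<close>
        \<open>f a > 0\<close> \<open>F a < 1\<close> \<open>deriv f a < 0\<close> \<open>0 < x\<close> x_le this]
    have "0 \<le> f a / (- deriv f a) / a"
      using elim \<open>f a > 0\<close> \<open>deriv f a < 0\<close> by (intro divide_nonneg_pos) auto
    have "a + f a / (- deriv f a) = a * (1 + f a / (- deriv f a) / a)"
      using elim by (simp add: field_simps)
    also have "\<dots> \<le> quantile F (1 - x * (1 - F a)) * (1 + f a / (- deriv f a) / a)"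
      using bounds(1) \<open>0 \<le> f a / (- deriv f a) / a\<close> by (intro mult_right_mono) auto
    finally show ?case
      using bounds elim by (auto intro: order.trans)
  qed
qed

theorem theorem8:
  fixes F f :: "real \<Rightarrow> real" and x :: real
  assumes F_mono: "mono F"
    and F_cont: "continuous_on UNIV F"
    and F_bot: "(F \<longlongrightarrow> 0) at_bot"
    and F_top: "(F \<longlongrightarrow> 1) at_top"
    and f_nonneg: "\<forall>t. f t \<ge> 0"
    and f_density: "\<forall>t. (f has_integral F t) {..t}"
    and A1: "assumption_A1 F f"
    and MDA: "MDA_Gumbel F"
    and A3: "assumption_A3 F f"
    and xF_inf: "\<forall>t. F t < 1"
    and x_gt: "1/2 < x" and x_le: "x \<le> 1"
  shows "((\<lambda>a. qstar F f x a / ereal (quantile F (1 - x * (1 - F a)))) \<longlongrightarrow> 1) at_top"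
proof -
  have "((\<lambda>a. 1 + f a / (- deriv f a) / a) \<longlongrightarrow> 1) at_top"
    using tendsto_add[OF tendsto_const density_over_slope_div_tendsto_0[OF A1 A3 xF_inf]] by simp
  with eventually_qstar_sandwich[OF F_mono F_cont F_top f_nonneg f_density
      A1 A3 xF_inf x_gt x_le]
  show ?thesis by (rule ereal_ratio_tendsto_1)
qed

end
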